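(* Let $(G,\cdot,N,\star,\odot)$ be a left bracoid (a left skew bracoid with $(N,\star)$ abelian) and $(H,\circ)$ a group. Assume (a) $\boxdot$ is a transitive right action of $(H,\circ)$ on $N$ such that $g\odot(\eta\boxdot h)=(g\odot\eta)\boxdot h$ for all $g\in G$, $h\in H$, $\eta\in N$; and (b) ${}^{\alpha(g)}(\eta^{\beta(h)})=({}^{\alpha(g)}\eta)^{\beta(h)}$ for all $g\in G$, $h\in H$, $\eta\in N$. Then for all $\eta\in N$ and $h\in H$: (1) $\overline{\eta}^{\beta(h)}=\overline{\eta^{\beta(h)}}$; (2) $\overline{\eta}\boxdot h=(e_N\boxdot h)\star(e_N\boxdot h)\star\overline{(\eta\boxdot h)}$.
   Context: For a group $(N,\star)$, $e_N$ denotes its identity and $\overline{\eta}$ the inverse of $\eta$. A left skew bracoid is $(G,\cdot,N,\star,\odot)$ with $(G,\cdot),(N,\star)$ groups and $\odot$ a transitive left action of $G$ on $N$ with $g\odot(\mu\star\eta)=(g\odot\mu)\star\overline{(g\odot e_N)}\star(g\odot\eta)$ for all $g\in G$, $\mu,\eta\in N$. For $g\in G$, ${}^{\alpha(g)}\eta=\overline{(g\odot e_N)}\star(g\odot\eta)\star\overline{\eta}$. For $h\in H$, $\eta^{\beta(h)}=\overline{\eta}\star(\eta\boxdot h)\star\overline{(e_N\boxdot h)}$. *)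

theory Defs
  imports "HOL-Algebra.Group"
begin

definition transitive_left_action ::
  "('g, 'a) monoid_scheme \<Rightarrow> ('n, 'b) monoid_scheme \<Rightarrow> ('g \<Rightarrow> 'n \<Rightarrow> 'n) \<Rightarrow> bool" where
  "transitive_left_action G N act \<longleftrightarrow>
     (\<forall>g\<in>carrier G. \<forall>\<eta>\<in>carrier N. act g \<eta> \<in> carrier N) \<and>
     (\<forall>\<eta>\<in>carrier N. act \<one>\<^bsub>G\<^esub> \<eta> = \<eta>) \<and>
     (\<forall>g\<in>carrier G. \<forall>g'\<in>carrier G. \<forall>\<eta>\<in>carrier N.
        act (g \<otimes>\<^bsub>G\<^esub> g') \<eta> = act g (act g' \<eta>)) \<and>
     (\<forall>\<mu>\<in>carrier N. \<forall>\<eta>\<in>carrier N. \<exists>g\<in>carrier G. act g \<mu> = \<eta>)"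

definition transitive_right_action ::
  "('h, 'a) monoid_scheme \<Rightarrow> ('n, 'b) monoid_scheme \<Rightarrow> ('n \<Rightarrow> 'h \<Rightarrow> 'n) \<Rightarrow> bool" where
  "transitive_right_action H N ract \<longleftrightarrow>
     (\<forall>h\<in>carrier H. \<forall>\<eta>\<in>carrier N. ract \<eta> h \<in> carrier N) \<and>
     (\<forall>\<eta>\<in>carrier N. ract \<eta> \<one>\<^bsub>H\<^esub> = \<eta>) \<and>
     (\<forall>h\<in>carrier H. \<forall>h'\<in>carrier H. \<forall>\<eta>\<in>carrier N.
        ract \<eta> (h \<otimes>\<^bsub>H\<^esub> h') = ract (ract \<eta> h) h') \<and>
     (\<forall>\<mu>\<in>carrier N. \<forall>\<eta>\<in>carrier N. \<exists>h\<in>carrier H. ract \<mu> h = \<eta>)"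

definition left_skew_bracoid ::
  "('g, 'a) monoid_scheme \<Rightarrow> ('n, 'b) monoid_scheme \<Rightarrow> ('g \<Rightarrow> 'n \<Rightarrow> 'n) \<Rightarrow> bool" where
  "left_skew_bracoid G N act \<longleftrightarrow>
     group G \<and> group N \<and> transitive_left_action G N act \<and>
     (\<forall>g\<in>carrier G. \<forall>\<mu>\<in>carrier N. \<forall>\<eta>\<in>carrier N.
        act g (\<mu> \<otimes>\<^bsub>N\<^esub> \<eta>) =
          act g \<mu> \<otimes>\<^bsub>N\<^esub> inv\<^bsub>N\<^esub> (act g \<one>\<^bsub>N\<^esub>) \<otimes>\<^bsub>N\<^esub> act g \<eta>)"

definition left_bracoid ::
  "('g, 'a) monoid_scheme \<Rightarrow> ('n, 'b) monoid_scheme \<Rightarrow> ('g \<Rightarrow> 'n \<Rightarrow> 'n) \<Rightarrow> bool" where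
  "left_bracoid G N act \<longleftrightarrow> left_skew_bracoid G N act \<and> comm_group N"

definition alpha_act ::
  "('n, 'b) monoid_scheme \<Rightarrow> ('g \<Rightarrow> 'n \<Rightarrow> 'n) \<Rightarrow> 'g \<Rightarrow> 'n \<Rightarrow> 'n" where
  "alpha_act N act g \<eta> =
     inv\<^bsub>N\<^esub> (act g \<one>\<^bsub>N\<^esub>) \<otimes>\<^bsub>N\<^esub> act g \<eta> \<otimes>\<^bsub>N\<^esub> inv\<^bsub>N\<^esub> \<eta>"

definition beta_act ::
  "('n, 'b) monoid_scheme \<Rightarrow> ('n \<Rightarrow> 'h \<Rightarrow> 'n) \<Rightarrow> 'h \<Rightarrow> 'n \<Rightarrow> 'n" where
  "beta_act N ract h \<eta> =
     inv\<^bsub>N\<^esub> \<eta> \<otimes>\<^bsub>N\<^esub> ract \<eta> h \<otimes>\<^bsub>N\<^esub> inv\<^bsub>N\<^esub> (ract \<one>\<^bsub>N\<^esub> h)"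

end

theory Submission
  imports Defs
begin

(* The bracoid relation makes each map \<eta> \<mapsto> g \<odot> \<eta> affine, so it sends \<eta>\<inverse> to
   (g \<odot> e) (g \<odot> \<eta>)\<inverse> (g \<odot> e). Given \<eta>, choose g with g \<odot> e = \<eta>; then \<alpha>(g) sends \<eta>\<inverse>
   to g \<odot> \<eta>\<inverse>, and hypothesis (b) at \<eta>\<inverse>, after expanding g \<odot> (\<eta>\<inverse>)\<^bsup>\<beta>(h)\<^esup> affinely and
   commuting \<odot> past \<boxdot>, cancels down to (\<eta>\<inverse> \<boxdot> h) (\<eta> \<boxdot> h) = (e \<boxdot> h)\<^sup>2, which is (2);
   (1) is a rearrangement of (2). *)

lemma (in group) affine_map_inv:
  assumes f_closed: "\<And>x. x \<in> carrier G \<Longrightarrow> f x \<in> carrier G"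
    and f_affine: "\<And>x y. x \<in> carrier G \<Longrightarrow> y \<in> carrier G \<Longrightarrow>
                     f (x \<otimes> y) = f x \<otimes> inv (f \<one>) \<otimes> f y"
    and x: "x \<in> carrier G"
  shows "f (inv x) = f \<one> \<otimes> inv (f x) \<otimes> f \<one>"
proof -
  have "f \<one> = f x \<otimes> inv (f \<one>) \<otimes> f (inv x)"
    using f_affine[of x "inv x"] x by simp
  then have "f (inv x) = inv (f x \<otimes> inv (f \<one>)) \<otimes> f \<one>"
    using x f_closed by (simp add: inv_solve_left)
  then show ?thesis
    using x f_closed by (simp add: inv_mult_group m_assoc)
qed

lemma left_skew_bracoid_group:
  "left_skew_bracoid G N act \<Longrightarrow> group N"
  unfolding left_skew_bracoid_def by blast

lemma left_skew_bracoid_act_closed: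
  "left_skew_bracoid G N act \<Longrightarrow> g \<in> carrier G \<Longrightarrow> \<eta> \<in> carrier N \<Longrightarrow> act g \<eta> \<in> carrier N"
  unfolding left_skew_bracoid_def transitive_left_action_def by blast

lemma left_skew_bracoid_act_mult:
  "left_skew_bracoid G N act \<Longrightarrow> g \<in> carrier G \<Longrightarrow> \<mu> \<in> carrier N \<Longrightarrow> \<eta> \<in> carrier N \<Longrightarrow>
     act g (\<mu> \<otimes>\<^bsub>N\<^esub> \<eta>) = act g \<mu> \<otimes>\<^bsub>N\<^esub> inv\<^bsub>N\<^esub> (act g \<one>\<^bsub>N\<^esub>) \<otimes>\<^bsub>N\<^esub> act g \<eta>"
  unfolding left_skew_bracoid_def by blast

lemma left_skew_bracoid_act_inv:
  assumes bracoid: "left_skew_bracoid G N act" and g: "g \<in> carrier G" and \<eta>: "\<eta> \<in> carrier N"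
  shows "act g (inv\<^bsub>N\<^esub> \<eta>) = act g \<one>\<^bsub>N\<^esub> \<otimes>\<^bsub>N\<^esub> inv\<^bsub>N\<^esub> (act g \<eta>) \<otimes>\<^bsub>N\<^esub> act g \<one>\<^bsub>N\<^esub>"
proof (rule group.affine_map_inv[OF left_skew_bracoid_group[OF bracoid] _ _ \<eta>])
  show "act g x \<in> carrier N" if "x \<in> carrier N" for x
    using left_skew_bracoid_act_closed[OF bracoid g that] .
  show "act g (x \<otimes>\<^bsub>N\<^esub> y) = act g x \<otimes>\<^bsub>N\<^esub> inv\<^bsub>N\<^esub> (act g \<one>\<^bsub>N\<^esub>) \<otimes>\<^bsub>N\<^esub> act g y"
    if "x \<in> carrier N" "y \<in> carrier N" for x y
    using left_skew_bracoid_act_mult[OF bracoid g that] .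
qed

lemma left_skew_bracoid_orbit_one:
  "left_skew_bracoid G N act \<Longrightarrow> \<eta> \<in> carrier N \<Longrightarrow> \<exists>g\<in>carrier G. act g \<one>\<^bsub>N\<^esub> = \<eta>"
  unfolding left_skew_bracoid_def transitive_left_action_def using monoid.one_closed[OF group.is_monoid] by metis

lemma left_bracoid_comm_group:
  "left_bracoid G N act \<Longrightarrow> comm_group N"
  unfolding left_bracoid_def by blast

lemma left_bracoid_imp_left_skew_bracoid:
  "left_bracoid G N act \<Longrightarrow> left_skew_bracoid G N act"
  unfolding left_bracoid_def by blast

lemma left_bracoid_act_mult_mult_inv:
  assumes bracoid: "left_bracoid G N act" and g: "g \<in> carrier G"
    and x: "x \<in> carrier N" and y: "y \<in> carrier N" and z: "z \<in> carrier N"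
  shows "act g (x \<otimes>\<^bsub>N\<^esub> y \<otimes>\<^bsub>N\<^esub> inv\<^bsub>N\<^esub> z) = act g x \<otimes>\<^bsub>N\<^esub> act g y \<otimes>\<^bsub>N\<^esub> inv\<^bsub>N\<^esub> (act g z)"
proof -
  interpret N: comm_group N using left_bracoid_comm_group[OF bracoid] .
  note skew = left_bracoid_imp_left_skew_bracoid[OF bracoid]
  note act_closed = left_skew_bracoid_act_closed[OF skew g]
  define c where "c = act g \<one>\<^bsub>N\<^esub>"
  have c: "c \<in> carrier N" unfolding c_def using act_closed by simp
  have "act g (x \<otimes>\<^bsub>N\<^esub> y \<otimes>\<^bsub>N\<^esub> inv\<^bsub>N\<^esub> z)
      = act g x \<otimes>\<^bsub>N\<^esub> inv\<^bsub>N\<^esub> c \<otimes>\<^bsub>N\<^esub> act g y \<otimes>\<^bsub>N\<^esub> inv\<^bsub>N\<^esub> c \<otimes>\<^bsub>N\<^esub> (c \<otimes>\<^bsub>N\<^esub> inv\<^bsub>N\<^esub> (act g z) \<otimes>\<^bsub>N\<^esub> c)"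
    using x y z by (simp add: left_skew_bracoid_act_mult[OF skew g]
        left_skew_bracoid_act_inv[OF skew g] c_def)
  also have "\<dots> = (act g x \<otimes>\<^bsub>N\<^esub> act g y \<otimes>\<^bsub>N\<^esub> inv\<^bsub>N\<^esub> (act g z)) \<otimes>\<^bsub>N\<^esub> ((inv\<^bsub>N\<^esub> c \<otimes>\<^bsub>N\<^esub> c) \<otimes>\<^bsub>N\<^esub> (inv\<^bsub>N\<^esub> c \<otimes>\<^bsub>N\<^esub> c))"
    using x y z c act_closed by (simp only: N.m_ac N.m_closed N.inv_closed)
  finally show ?thesis
    using x y z c act_closed by simp
qed

lemma left_bracoid_alpha_inv_base:
  assumes bracoid: "left_bracoid G N act" and g: "g \<in> carrier G"
  shows "alpha_act N act g (inv\<^bsub>N\<^esub> (act g \<one>\<^bsub>N\<^esub>)) = act g (inv\<^bsub>N\<^esub> (act g \<one>\<^bsub>N\<^esub>))"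
proof -
  interpret N: comm_group N using left_bracoid_comm_group[OF bracoid] .
  note skew = left_bracoid_imp_left_skew_bracoid[OF bracoid]
  have closed: "act g \<one>\<^bsub>N\<^esub> \<in> carrier N" "act g (inv\<^bsub>N\<^esub> (act g \<one>\<^bsub>N\<^esub>)) \<in> carrier N"
    using left_skew_bracoid_act_closed[OF skew g] by simp_all
  then have "inv\<^bsub>N\<^esub> (act g \<one>\<^bsub>N\<^esub>) \<otimes>\<^bsub>N\<^esub> act g (inv\<^bsub>N\<^esub> (act g \<one>\<^bsub>N\<^esub>)) \<otimes>\<^bsub>N\<^esub> act g \<one>\<^bsub>N\<^esub>
      = act g (inv\<^bsub>N\<^esub> (act g \<one>\<^bsub>N\<^esub>)) \<otimes>\<^bsub>N\<^esub> (inv\<^bsub>N\<^esub> (act g \<one>\<^bsub>N\<^esub>) \<otimes>\<^bsub>N\<^esub> act g \<one>\<^bsub>N\<^esub>)"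
    by (simp only: N.m_ac N.inv_closed)
  with closed show ?thesis
    unfolding alpha_act_def by simp
qed

lemma (in group) inv_mult_inv_mult_eq_inv_iff:
  assumes q: "q \<in> carrier G" and r: "r \<in> carrier G" and t: "t \<in> carrier G"
  shows "inv r \<otimes> inv q \<otimes> t = inv t \<longleftrightarrow> q = t \<otimes> t \<otimes> inv r"
proof -
  have "inv r \<otimes> inv q \<otimes> t = inv t \<longleftrightarrow> inv (inv r \<otimes> inv q \<otimes> t) = t"
    using q r t by (metis inv_closed inv_inv m_closed)
  also have "\<dots> \<longleftrightarrow> inv t \<otimes> (q \<otimes> r) = t"
    using q r t by (simp add: inv_mult_group)
  also have "\<dots> \<longleftrightarrow> q \<otimes> r = t \<otimes> t"
    using q r t by (simp add: inv_solve_left')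
  also have "\<dots> \<longleftrightarrow> q = t \<otimes> t \<otimes> inv r"
    using q r t by (metis inv_solve_right m_closed)
  finally show ?thesis .
qed

lemma left_bracoid_ract_inv:
  assumes bracoid: "left_bracoid G N act"
    and ract_closed: "\<And>\<eta>. \<eta> \<in> carrier N \<Longrightarrow> ract \<eta> h \<in> carrier N"
    and commute: "\<And>g \<eta>. g \<in> carrier G \<Longrightarrow> \<eta> \<in> carrier N \<Longrightarrow>
                    act g (ract \<eta> h) = ract (act g \<eta>) h"
    and ab: "\<And>g \<eta>. g \<in> carrier G \<Longrightarrow> \<eta> \<in> carrier N \<Longrightarrow>
               alpha_act N act g (beta_act N ract h \<eta>) = beta_act N ract h (alpha_act N act g \<eta>)"
    and \<eta>: "\<eta> \<in> carrier N"
  shows "ract (inv\<^bsub>N\<^esub> \<eta>) h = ract \<one>\<^bsub>N\<^esub> h \<otimes>\<^bsub>N\<^esub> ract \<one>\<^bsub>N\<^esub> h \<otimes>\<^bsub>N\<^esub> inv\<^bsub>N\<^esub> (ract \<eta> h)"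
proof -
  interpret N: comm_group N using left_bracoid_comm_group[OF bracoid] .
  note skew = left_bracoid_imp_left_skew_bracoid[OF bracoid]
  obtain g where g: "g \<in> carrier G" and base: "act g \<one>\<^bsub>N\<^esub> = \<eta>"
    using left_skew_bracoid_orbit_one[OF skew \<eta>] by blast
  define \<mu> where "\<mu> = act g (inv\<^bsub>N\<^esub> \<eta>)"
  define t where "t = ract \<one>\<^bsub>N\<^esub> h"
  define Q where "Q = ract (inv\<^bsub>N\<^esub> \<eta>) h"
  define R where "R = ract \<eta> h"
  define M where "M = ract \<mu> h"
  have closed: "\<mu> \<in> carrier N" "t \<in> carrier N" "Q \<in> carrier N" "R \<in> carrier N" "M \<in> carrier N"
    unfolding \<mu>_def t_def Q_def R_def M_def
    using \<eta> left_skew_bracoid_act_closed[OF skew g] ract_closed by simp_all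
  have act_\<eta>: "act g \<eta> = \<eta> \<otimes>\<^bsub>N\<^esub> inv\<^bsub>N\<^esub> \<mu> \<otimes>\<^bsub>N\<^esub> \<eta>"
    using left_skew_bracoid_act_inv[OF skew g N.inv_closed[OF \<eta>]] \<eta> unfolding \<mu>_def base by simp
  have act_t: "act g t = R"
    unfolding t_def R_def using commute[OF g N.one_closed] base by simp
  have act_Q: "act g Q = M"
    unfolding Q_def M_def \<mu>_def using commute[OF g N.inv_closed[OF \<eta>]] .
  have beta_inv_\<eta>: "beta_act N ract h (inv\<^bsub>N\<^esub> \<eta>) = \<eta> \<otimes>\<^bsub>N\<^esub> Q \<otimes>\<^bsub>N\<^esub> inv\<^bsub>N\<^esub> t"
    unfolding beta_act_def Q_def t_def using \<eta> by simp
  have "alpha_act N act g (beta_act N ract h (inv\<^bsub>N\<^esub> \<eta>))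
      = inv\<^bsub>N\<^esub> \<eta> \<otimes>\<^bsub>N\<^esub> ((\<eta> \<otimes>\<^bsub>N\<^esub> inv\<^bsub>N\<^esub> \<mu> \<otimes>\<^bsub>N\<^esub> \<eta>) \<otimes>\<^bsub>N\<^esub> M \<otimes>\<^bsub>N\<^esub> inv\<^bsub>N\<^esub> R) \<otimes>\<^bsub>N\<^esub> (inv\<^bsub>N\<^esub> \<eta> \<otimes>\<^bsub>N\<^esub> inv\<^bsub>N\<^esub> Q \<otimes>\<^bsub>N\<^esub> t)"
    unfolding beta_inv_\<eta> alpha_act_def base
    using \<eta> closed by (simp add: left_bracoid_act_mult_mult_inv[OF bracoid g] act_\<eta> act_Q act_t N.inv_mult)
  also have "\<dots> = (inv\<^bsub>N\<^esub> \<mu> \<otimes>\<^bsub>N\<^esub> M \<otimes>\<^bsub>N\<^esub> (inv\<^bsub>N\<^esub> R \<otimes>\<^bsub>N\<^esub> inv\<^bsub>N\<^esub> Q \<otimes>\<^bsub>N\<^esub> t)) \<otimes>\<^bsub>N\<^esub> ((\<eta> \<otimes>\<^bsub>N\<^esub> inv\<^bsub>N\<^esub> \<eta>) \<otimes>\<^bsub>N\<^esub> (\<eta> \<otimes>\<^bsub>N\<^esub> inv\<^bsub>N\<^esub> \<eta>))"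
    using \<eta> closed by (simp only: N.m_ac N.m_closed N.inv_closed)
  finally have "alpha_act N act g (beta_act N ract h (inv\<^bsub>N\<^esub> \<eta>))
      = inv\<^bsub>N\<^esub> \<mu> \<otimes>\<^bsub>N\<^esub> M \<otimes>\<^bsub>N\<^esub> (inv\<^bsub>N\<^esub> R \<otimes>\<^bsub>N\<^esub> inv\<^bsub>N\<^esub> Q \<otimes>\<^bsub>N\<^esub> t)"
    using \<eta> closed by simp
  moreover have "beta_act N ract h (alpha_act N act g (inv\<^bsub>N\<^esub> \<eta>))
      = inv\<^bsub>N\<^esub> \<mu> \<otimes>\<^bsub>N\<^esub> M \<otimes>\<^bsub>N\<^esub> inv\<^bsub>N\<^esub> t"
    using left_bracoid_alpha_inv_base[OF bracoid g]
    unfolding base beta_act_def \<mu>_def[symmetric] t_def[symmetric] M_def by simp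
  ultimately have "inv\<^bsub>N\<^esub> R \<otimes>\<^bsub>N\<^esub> inv\<^bsub>N\<^esub> Q \<otimes>\<^bsub>N\<^esub> t = inv\<^bsub>N\<^esub> t"
    using ab[OF g N.inv_closed[OF \<eta>]] closed by (simp add: N.m_assoc)
  then show ?thesis
    unfolding Q_def[symmetric] t_def[symmetric] R_def[symmetric]
    using N.inv_mult_inv_mult_eq_inv_iff closed by blast
qed

lemma (in comm_group) beta_act_inv:
  assumes \<eta>: "\<eta> \<in> carrier G" and R: "ract \<eta> h \<in> carrier G" and t: "ract \<one> h \<in> carrier G"
    and ract_inv: "ract (inv \<eta>) h = ract \<one> h \<otimes> ract \<one> h \<otimes> inv (ract \<eta> h)"
  shows "beta_act G ract h (inv \<eta>) = inv (beta_act G ract h \<eta>)"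
proof -
  have "beta_act G ract h (inv \<eta>)
      = (\<eta> \<otimes> ract \<one> h \<otimes> inv (ract \<eta> h)) \<otimes> (ract \<one> h \<otimes> inv (ract \<one> h))"
    unfolding beta_act_def ract_inv using \<eta> R t by (simp only: inv_inv m_ac m_closed inv_closed)
  also have "\<dots> = inv (beta_act G ract h \<eta>)"
    unfolding beta_act_def using \<eta> R t by (simp add: inv_mult m_ac)
  finally show ?thesis .
qed

theorem proposition3p5:
  fixes G :: "('g, 'a) monoid_scheme" and N :: "('n, 'b) monoid_scheme"
    and H :: "('h, 'c) monoid_scheme"
    and act :: "'g \<Rightarrow> 'n \<Rightarrow> 'n" and ract :: "'n \<Rightarrow> 'h \<Rightarrow> 'n"
  assumes bracoid: "left_bracoid G N act"
    and grpH: "group H"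
    and ract: "transitive_right_action H N ract"
    and commute: "\<forall>g\<in>carrier G. \<forall>h\<in>carrier H. \<forall>\<eta>\<in>carrier N.
                    act g (ract \<eta> h) = ract (act g \<eta>) h"
    and ab: "\<forall>g\<in>carrier G. \<forall>h\<in>carrier H. \<forall>\<eta>\<in>carrier N.
               alpha_act N act g (beta_act N ract h \<eta>) =
               beta_act N ract h (alpha_act N act g \<eta>)"
  shows "\<forall>\<eta>\<in>carrier N. \<forall>h\<in>carrier H.
           beta_act N ract h (inv\<^bsub>N\<^esub> \<eta>) = inv\<^bsub>N\<^esub> (beta_act N ract h \<eta>) \<and>
           ract (inv\<^bsub>N\<^esub> \<eta>) h =
             ract \<one>\<^bsub>N\<^esub> h \<otimes>\<^bsub>N\<^esub> ract \<one>\<^bsub>N\<^esub> h \<otimes>\<^bsub>N\<^esub> inv\<^bsub>N\<^esub> (ract \<eta> h)"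
proof (intro ballI conjI)
  fix \<eta> h assume \<eta>: "\<eta> \<in> carrier N" and h: "h \<in> carrier H"
  interpret N: comm_group N using left_bracoid_comm_group[OF bracoid] .
  have ract_closed: "\<And>\<eta>. \<eta> \<in> carrier N \<Longrightarrow> ract \<eta> h \<in> carrier N"
    using ract h unfolding transitive_right_action_def by blast
  show ract_inv: "ract (inv\<^bsub>N\<^esub> \<eta>) h =
      ract \<one>\<^bsub>N\<^esub> h \<otimes>\<^bsub>N\<^esub> ract \<one>\<^bsub>N\<^esub> h \<otimes>\<^bsub>N\<^esub> inv\<^bsub>N\<^esub> (ract \<eta> h)"
  proof (rule left_bracoid_ract_inv[where ract = ract and h = h, OF bracoid ract_closed _ _ \<eta>])
    show "act g (ract \<mu> h) = ract (act g \<mu>) h"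
      if "g \<in> carrier G" "\<mu> \<in> carrier N" for g \<mu>
      using commute h that by blast
    show "alpha_act N act g (beta_act N ract h \<mu>) = beta_act N ract h (alpha_act N act g \<mu>)"
      if "g \<in> carrier G" "\<mu> \<in> carrier N" for g \<mu>
      using ab h that by blast
  qed
  show "beta_act N ract h (inv\<^bsub>N\<^esub> \<eta>) = inv\<^bsub>N\<^esub> (beta_act N ract h \<eta>)"
    using N.beta_act_inv[where ract = ract and h = h, OF \<eta> ract_closed[OF \<eta>] ract_closed[OF N.one_closed] ract_inv] .
qed

end
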